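(* Let $\mathbb{F}\in\{\mathbb{R},\mathbb{C}\}$ and $M>N$. Let $\Phi=\{\varphi_i\}_{i=1}^M$ be a Parseval frame for $\mathbb{F}^N$ and let $\Psi=\{\psi_i\}_{i=1}^M$ be a Naimark complement of $\Phi$. Then $TC(\Phi)=TC(\Psi)$.
   Context: A Parseval frame for $\mathbb{F}^N$ is a family $\Phi=\{\varphi_i\}_{i=1}^M\subseteq\mathbb{F}^N$ such that, viewing $\Phi$ as the $N\times M$ matrix with columns $\varphi_i$, $\Phi\Phi^*=I$. A Naimark complement of a Parseval frame $\Phi$ for $\mathbb{F}^N$ is any family $\Psi=\{\psi_i\}_{i=1}^M\subseteq\mathbb{F}^{M-N}$ with $\Psi^*\Psi=I-\Phi^*\Phi$ (it is then a Parseval frame for $\mathbb{F}^{M-N}$). The total coherence of a family $\Phi$ is $TC(\Phi)=\sum_{i\neq j}|\langle\varphi_i,\varphi_j\rangle|$. *)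

theory Defs
  imports Complex_Main
begin

text \<open>A family of M vectors in F^n is represented as Phi :: nat => nat => F,
  where Phi i k is the k-th coordinate (k < n) of the i-th vector (i < M).
  Two versions: F = real and F = complex.\<close>

definition inner_c :: "nat \<Rightarrow> (nat \<Rightarrow> complex) \<Rightarrow> (nat \<Rightarrow> complex) \<Rightarrow> complex" where
  "inner_c n x y = (\<Sum>k<n. x k * cnj (y k))"

text \<open>Phi Phi^* = I (N x N), columns of Phi are the vectors.\<close>
definition parseval_c :: "nat \<Rightarrow> nat \<Rightarrow> (nat \<Rightarrow> nat \<Rightarrow> complex) \<Rightarrow> bool" where
  "parseval_c N M Phi \<longleftrightarrow>
     (\<forall>a<N. \<forall>b<N. (\<Sum>i<M. Phi i a * cnj (Phi i b)) = (if a = b then 1 else 0))"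

text \<open>Psi^* Psi = I - Phi^* Phi (M x M), Psi consists of M vectors in F^(M-N).\<close>
definition naimark_c :: "nat \<Rightarrow> nat \<Rightarrow> (nat \<Rightarrow> nat \<Rightarrow> complex) \<Rightarrow> (nat \<Rightarrow> nat \<Rightarrow> complex) \<Rightarrow> bool" where
  "naimark_c N M Phi Psi \<longleftrightarrow>
     (\<forall>i<M. \<forall>j<M. (\<Sum>k<M - N. cnj (Psi i k) * Psi j k)
        = (if i = j then 1 else 0) - (\<Sum>k<N. cnj (Phi i k) * Phi j k))"

definition TC_c :: "nat \<Rightarrow> nat \<Rightarrow> (nat \<Rightarrow> nat \<Rightarrow> complex) \<Rightarrow> real" where
  "TC_c n M Phi = (\<Sum>i<M. \<Sum>j<M. if i \<noteq> j then cmod (inner_c n (Phi i) (Phi j)) else 0)"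

definition inner_r :: "nat \<Rightarrow> (nat \<Rightarrow> real) \<Rightarrow> (nat \<Rightarrow> real) \<Rightarrow> real" where
  "inner_r n x y = (\<Sum>k<n. x k * y k)"

definition parseval_r :: "nat \<Rightarrow> nat \<Rightarrow> (nat \<Rightarrow> nat \<Rightarrow> real) \<Rightarrow> bool" where
  "parseval_r N M Phi \<longleftrightarrow>
     (\<forall>a<N. \<forall>b<N. (\<Sum>i<M. Phi i a * Phi i b) = (if a = b then 1 else 0))"

definition naimark_r :: "nat \<Rightarrow> nat \<Rightarrow> (nat \<Rightarrow> nat \<Rightarrow> real) \<Rightarrow> (nat \<Rightarrow> nat \<Rightarrow> real) \<Rightarrow> bool" where
  "naimark_r N M Phi Psi \<longleftrightarrow>
     (\<forall>i<M. \<forall>j<M. (\<Sum>k<M - N. Psi i k * Psi j k)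
        = (if i = j then 1 else 0) - (\<Sum>k<N. Phi i k * Phi j k))"

definition TC_r :: "nat \<Rightarrow> nat \<Rightarrow> (nat \<Rightarrow> nat \<Rightarrow> real) \<Rightarrow> real" where
  "TC_r n M Phi = (\<Sum>i<M. \<Sum>j<M. if i \<noteq> j then \<bar>inner_r n (Phi i) (Phi j)\<bar> else 0)"

end

theory Submission
  imports Defs
begin

text \<open>The Gram matrices of \<open>\<Phi>\<close> and of a Naimark complement \<open>\<Psi>\<close> add up to the identity, so
  their off-diagonal entries are negatives of each other. Total coherence only sees the moduli
  of the off-diagonal Gram entries, hence it is the same for both families.\<close>

lemma TC_r_eqI:
  assumes "\<And>i j. i < M \<Longrightarrow> j < M \<Longrightarrow> i \<noteq> j \<Longrightarrow>
             \<bar>inner_r n (Phi i) (Phi j)\<bar> = \<bar>inner_r m (Psi i) (Psi j)\<bar>"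
  shows "TC_r n M Phi = TC_r m M Psi"
  unfolding TC_r_def using assms by (intro sum.cong) auto

lemma TC_c_eqI:
  assumes "\<And>i j. i < M \<Longrightarrow> j < M \<Longrightarrow> i \<noteq> j \<Longrightarrow>
             cmod (inner_c n (Phi i) (Phi j)) = cmod (inner_c m (Psi i) (Psi j))"
  shows "TC_c n M Phi = TC_c m M Psi"
  unfolding TC_c_def using assms by (intro sum.cong) auto

lemma naimark_r_inner_offdiag:
  assumes "naimark_r N M Phi Psi" "i < M" "j < M" "i \<noteq> j"
  shows "inner_r (M - N) (Psi i) (Psi j) = - inner_r N (Phi i) (Phi j)"
  using assms unfolding naimark_r_def inner_r_def by auto

lemma naimark_c_inner_offdiag:
  assumes "naimark_c N M Phi Psi" "i < M" "j < M" "i \<noteq> j"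
  shows "inner_c (M - N) (Psi i) (Psi j) = - inner_c N (Phi i) (Phi j)"
proof -
  \<comment> \<open>entry \<open>(j, i)\<close> of \<open>\<Psi>\<^sup>* \<Psi>\<close> is \<open>inner_c (M - N) (Psi i) (Psi j)\<close>\<close>
  have "(\<Sum>k<M - N. cnj (Psi j k) * Psi i k) = - (\<Sum>k<N. cnj (Phi j k) * Phi i k)"
    using assms unfolding naimark_c_def by auto
  then show ?thesis
    unfolding inner_c_def by (simp add: mult.commute)
qed

theorem proposition1:
  shows "(\<forall>(N::nat) (M::nat) (Phi::nat \<Rightarrow> nat \<Rightarrow> real) Psi.
            N < M \<and> parseval_r N M Phi \<and> naimark_r N M Phi Psi
              \<longrightarrow> TC_r N M Phi = TC_r (M - N) M Psi)
       \<and> (\<forall>(N::nat) (M::nat) (Phi::nat \<Rightarrow> nat \<Rightarrow> complex) Psi.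
            N < M \<and> parseval_c N M Phi \<and> naimark_c N M Phi Psi
              \<longrightarrow> TC_c N M Phi = TC_c (M - N) M Psi)"
  by (auto intro!: TC_r_eqI TC_c_eqI simp: naimark_r_inner_offdiag naimark_c_inner_offdiag)

end
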